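(* Equip $\mathfrak{M}$ with the inverse lexicographic term order determined by the total order $x_{1,2}>x_{1,3}>\cdots>x_{1,n}>x_{2,3}>x_{2,4}>\cdots>x_{2,n}>\cdots>x_{n-1,n}$ on the indeterminates (i.e., $x_{i,j}>x_{u,v}$ iff $i<u$, or $i=u$ and $j<v$). Then the set $$G=\{\,x_{i,k}x_{i,j}-x_{i,j}x_{j,k}+x_{i,k}x_{j,k}+\beta x_{i,k}+\alpha \ \mid\ 1\le i<j<k\le n\,\}$$ is a Gröbner basis of the ideal $\mathcal{J}$ of $\mathcal{X}$ with respect to this order.
   Context: Let $\mathbf{k}$ be a commutative ring, $\beta,\alpha\in\mathbf{k}$, $n$ a positive integer. Let $\mathcal{X}=\mathbf{k}[x_{i,j}\mid 1\le i<j\le n]$ be the polynomial ring in the indeterminates $x_{i,j}$, $\mathfrak{M}$ its set of monomials, and $\mathcal{J}$ the ideal generated by all $x_{i,j}x_{j,k}-x_{i,k}(x_{i,j}+x_{j,k}+\beta)-\alpha$ for $1\le i<j<k\le n$. Inverse lexicographic order determined by a total order on the indeterminates: for monomials $\mathfrak{m}=\prod\xi^{m_\xi}$, $\mathfrak{n}=\prod\xi^{n_\xi}$, $\mathfrak{m}\le\mathfrak{n}$ iff $\mathfrak{m}=\mathfrak{n}$ or the largest indeterminate $\xi$ with $m_\xi\neq n_\xi$ has $m_\xi<n_\xi$. For nonzero $f$, the head term $\operatorname{HT}(f)$ is the largest monomial with nonzero coefficient in $f$; $f$ is monic if that coefficient is $1$. For a set $G$ of monic polynomials, write $f\underset{G}{\longrightarrow}g$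 if there exist $p\in G$ and monomials $\mathfrak{t},\mathfrak{s}$ such that the coefficient $a$ of $\mathfrak{t}$ in $f$ is nonzero, $\mathfrak{s}\operatorname{HT}(p)=\mathfrak{t}$, and $g=f-a\,\mathfrak{s}\,p$; let $\overset{*}{\underset{G}{\longrightarrow}}$ be its reflexive-transitive closure. A set $G$ of monic polynomials is a Gröbner basis of an ideal $\mathcal{I}$ if $G$ generates $\mathcal{I}$ and every $p\in\mathcal{I}$ satisfies $p\overset{*}{\underset{G}{\longrightarrow}}0$ (equivalently, every polynomial reduces via $\overset{*}{\underset{G}{\longrightarrow}}$ to a unique polynomial that is a $\mathbf{k}$-linear combination of monomials not divisible by any $\operatorname{HT}(g)$, $g\in G$). *)

theory Defs
  imports "HOL-Library.Poly_Mapping"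
begin

text \<open>Indeterminates x_{i,j} are indexed by pairs (i,j); monomials are finitely
supported exponent vectors; polynomials with coefficients in 'k are finitely
supported maps from monomials to 'k (multiplication = convolution).\<close>

type_synonym mon = "(nat \<times> nat) \<Rightarrow>\<^sub>0 nat"
type_synonym 'k mpoly = "mon \<Rightarrow>\<^sub>0 'k"

definition Vars :: "nat \<Rightarrow> (nat \<times> nat) set" where
  "Vars n = {(i, j). 1 \<le> i \<and> i < j \<and> j \<le> n}"

definition Xring :: "nat \<Rightarrow> ('k::comm_ring_1) mpoly set" where
  "Xring n = {p :: 'k mpoly. \<forall>m \<in> Poly_Mapping.keys p. Poly_Mapping.keys m \<subseteq> Vars n}"

definition var :: "nat \<Rightarrow> nat \<Rightarrow> ('k::comm_ring_1) mpoly" where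
  "var i j = Poly_Mapping.single (Poly_Mapping.single (i, j) 1) 1"

definition const :: "'k::comm_ring_1 \<Rightarrow> 'k mpoly" where
  "const c = Poly_Mapping.single 0 c"

definition Triples :: "nat \<Rightarrow> (nat \<times> nat \<times> nat) set" where
  "Triples n = {(i, j, k). 1 \<le> i \<and> i < j \<and> j < k \<and> k \<le> n}"

definition Jgen :: "'k::comm_ring_1 \<Rightarrow> 'k \<Rightarrow> nat \<Rightarrow> nat \<Rightarrow> nat \<Rightarrow> 'k mpoly" where
  "Jgen \<beta> \<alpha> i j k =
     var i j * var j k - var i k * (var i j + var j k + const \<beta>) - const \<alpha>"

definition ideal_gen :: "nat \<Rightarrow> ('k::comm_ring_1) mpoly set \<Rightarrow> 'k mpoly set" where
  "ideal_gen n S = {p. \<exists>F q. finite F \<and> F \<subseteq> S \<and> (\<forall>f\<in>F. q f \<in> Xring n)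
                         \<and> p = (\<Sum>f\<in>F. q f * f)}"

definition Jideal :: "'k::comm_ring_1 \<Rightarrow> 'k \<Rightarrow> nat \<Rightarrow> 'k mpoly set" where
  "Jideal \<beta> \<alpha> n = ideal_gen n {Jgen \<beta> \<alpha> i j k | i j k. (i, j, k) \<in> Triples n}"

definition var_gt :: "nat \<times> nat \<Rightarrow> nat \<times> nat \<Rightarrow> bool" where
  "var_gt a b \<longleftrightarrow> fst a < fst b \<or> (fst a = fst b \<and> snd a < snd b)"

definition mon_le :: "(nat \<times> nat \<Rightarrow> nat \<times> nat \<Rightarrow> bool) \<Rightarrow> mon \<Rightarrow> mon \<Rightarrow> bool" where
  "mon_le gt m m' \<longleftrightarrow> m = m' \<or>
     (\<exists>\<xi>. Poly_Mapping.lookup m \<xi> < Poly_Mapping.lookup m' \<xi> \<and>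
          (\<forall>\<eta>. gt \<eta> \<xi> \<longrightarrow> Poly_Mapping.lookup m \<eta> = Poly_Mapping.lookup m' \<eta>))"

definition HT :: "(nat \<times> nat \<Rightarrow> nat \<times> nat \<Rightarrow> bool) \<Rightarrow> ('k::comm_ring_1) mpoly \<Rightarrow> mon" where
  "HT gt f = (THE m. m \<in> Poly_Mapping.keys f \<and> (\<forall>m' \<in> Poly_Mapping.keys f. mon_le gt m' m))"

definition monic :: "(nat \<times> nat \<Rightarrow> nat \<times> nat \<Rightarrow> bool) \<Rightarrow> ('k::comm_ring_1) mpoly \<Rightarrow> bool" where
  "monic gt f \<longleftrightarrow> f \<noteq> 0 \<and> Poly_Mapping.lookup f (HT gt f) = 1"

definition red :: "(nat \<times> nat \<Rightarrow> nat \<times> nat \<Rightarrow> bool) \<Rightarrow> ('k::comm_ring_1) mpoly set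
                    \<Rightarrow> 'k mpoly \<Rightarrow> 'k mpoly \<Rightarrow> bool" where
  "red gt G f g \<longleftrightarrow> (\<exists>p \<in> G. \<exists>t s. Poly_Mapping.lookup f t \<noteq> 0 \<and> s + HT gt p = t
                        \<and> g = f - Poly_Mapping.single s (Poly_Mapping.lookup f t) * p)"

definition is_groebner_basis ::
  "(nat \<times> nat \<Rightarrow> nat \<times> nat \<Rightarrow> bool) \<Rightarrow> nat \<Rightarrow> ('k::comm_ring_1) mpoly set \<Rightarrow> 'k mpoly set \<Rightarrow> bool" where
  "is_groebner_basis gt n G I \<longleftrightarrow>
     (\<forall>g \<in> G. monic gt g) \<and> ideal_gen n G = I \<and> (\<forall>p \<in> I. (red gt G)\<^sup>*\<^sup>* p 0)"

end

theory Submission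
  imports Defs "HOL-Library.Product_Lexorder"
begin

(*
  Buchberger's criterion, in the form used here: G is a Groebner basis of the ideal it
  generates once every S-polynomial of two elements of G is a combination of multiples s g'
  (g' in G) with all s HT(g') below the least common multiple of the two head terms.

  The head term of x_ik x_ij - x_ij x_jk + x_ik x_jk + beta x_ik + alpha is x_ij x_ik. Pairs
  with coprime head terms satisfy the criterion by the product criterion. All other pairs
  share the first index i and involve indices i < a < b < c; the S-polynomials of the
  generators for iab, iac, ibc all sit at x_ia x_ib x_ic, and explicit syzygies, which also
  use the generator for abc, rewrite each of them below that monomial.
*)

abbreviation lookup :: "('a \<Rightarrow>\<^sub>0 'b::zero) \<Rightarrow> 'a \<Rightarrow> 'b" where
  "lookup \<equiv> Poly_Mapping.lookup"

abbreviation keys :: "('a \<Rightarrow>\<^sub>0 'b::zero) \<Rightarrow> 'a set" where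
  "keys \<equiv> Poly_Mapping.keys"

abbreviation single :: "'a \<Rightarrow> 'b::zero \<Rightarrow> 'a \<Rightarrow>\<^sub>0 'b" where
  "single \<equiv> Poly_Mapping.single"

section \<open>The term order\<close>

text \<open>The largest indeterminate for var_gt is the smallest index pair, so the inverse
  lexicographic order is the order that Poly_Mapping puts on monomials, taken with the
  lexicographic order on index pairs.\<close>

lemma var_gt_iff_less: "var_gt a b \<longleftrightarrow> a < b"
  by (auto simp: var_gt_def less_prod_def')

lemma mon_le_var_gt_iff: "mon_le var_gt m m' \<longleftrightarrow> m \<le> m'"
  unfolding mon_le_def var_gt_iff_less less_eq_poly_mapping.rep_eq less_fun_def lookup_inject
  by (rule iffI) (erule disjE; blast)+

lemma less_poly_mappingI:
  fixes m m' :: "'a::linorder \<Rightarrow>\<^sub>0 'b::{zero,linorder}"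
  assumes "lookup m k < lookup m' k" and "\<And>k'. k' < k \<Longrightarrow> lookup m k' = lookup m' k'"
  shows "m < m'"
  using assms unfolding less_poly_mapping.rep_eq less_fun_def by blast

abbreviation ht :: "'k::comm_ring_1 mpoly \<Rightarrow> mon" where
  "ht \<equiv> HT var_gt"

lemma HT_eqI:
  fixes p :: "'k::comm_ring_1 mpoly"
  assumes "m \<in> keys p" and "\<And>m'. m' \<in> keys p \<Longrightarrow> m' \<le> m"
  shows "ht p = m"
  unfolding HT_def mon_le_var_gt_iff
  by (rule the_equality) (use assms in \<open>auto intro: antisym\<close>)

lemma HT_eq_Max:
  fixes p :: "'k::comm_ring_1 mpoly"
  assumes "p \<noteq> 0"
  shows "ht p = Max (keys p)"
  using assms by (intro HT_eqI) auto

lemma HT_in_keys: "p \<noteq> 0 \<Longrightarrow> ht p \<in> keys p"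
  by (simp add: HT_eq_Max)

lemma le_HT: "m \<in> keys p \<Longrightarrow> m \<le> ht p"
  using HT_eq_Max[of p] by fastforce

definition mons_over :: "(nat \<times> nat) set \<Rightarrow> mon set" where
  "mons_over V = {m. keys m \<subseteq> V}"

lemma mons_over_add: "a \<in> mons_over V \<Longrightarrow> b \<in> mons_over V \<Longrightarrow> a + b \<in> mons_over V"
  using keys_add[of a b] by (auto simp: mons_over_def)

lemma mons_over_diff: "a \<in> mons_over V \<Longrightarrow> a - b \<in> mons_over V"
  by (auto simp: mons_over_def in_keys_iff minus_poly_mapping.rep_eq)

lemma zero_in_mons_over: "0 \<in> mons_over V"
  by (simp add: mons_over_def)

text \<open>Over finitely many indeterminates the order is lexicographic on a fixed finite number
  of natural exponents, hence well-founded.\<close>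

lemma wf_less_mons_over:
  assumes "finite V"
  shows "wf {(a, b). a < b \<and> a \<in> mons_over V \<and> b \<in> mons_over V}"
proof -
  obtain xs where xs: "sorted_wrt (<) xs" "set xs = V"
    using finite_set_strict_sorted[OF assms] by blast
  define f where "f m = map (lookup m) xs" for m :: mon
  have "(f a, f b) \<in> lex less_than"
    if ab: "a < b" "a \<in> mons_over V" "b \<in> mons_over V" for a b
  proof -
    obtain k where k: "lookup a k < lookup b k" "\<And>k'. k' < k \<Longrightarrow> lookup a k' = lookup b k'"
      using ab(1) unfolding less_poly_mapping.rep_eq less_fun_def by blast
    have "k \<in> set xs" using k(1) ab(3) xs(2) by (auto simp: mons_over_def in_keys_iff)
    then obtain p where p: "p < length xs" "xs ! p = k" by (auto simp: in_set_conv_nth)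
    have split: "xs = take p xs @ k # drop (Suc p) xs"
      using id_take_nth_drop[OF p(1)] p(2) by simp
    have "lookup a x = lookup b x" if "x \<in> set (take p xs)" for x
    proof -
      obtain q where "q < p" "x = xs ! q" using \<open>x \<in> set (take p xs)\<close> p(1)
        by (auto simp: in_set_conv_nth)
      then have "x < k" using sorted_wrt_nth_less[OF xs(1)] p by auto
      then show ?thesis using k(2) by blast
    qed
    then have prefix: "map (lookup a) (take p xs) = map (lookup b) (take p xs)" by simp
    have f_split: "f m = map (lookup m) (take p xs) @ lookup m k # map (lookup m) (drop (Suc p) xs)"
      for m using arg_cong[OF split, of "map (lookup m)"] by (simp add: f_def)
    have "length (f a) = length (f b)" by (simp add: f_def)
    then show ?thesis
      unfolding lex_conv using f_split[of a] f_split[of b] prefix k(1) by auto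
  qed
  then have "{(a, b). a < b \<and> a \<in> mons_over V \<and> b \<in> mons_over V} \<subseteq> inv_image (lex less_than) f"
    by auto
  then show ?thesis by (rule wf_subset[OF wf_inv_image[OF wf_lex[OF wf_less_than]]])
qed

lemma mons_over_less_induct [consumes 2, case_names less]:
  assumes "finite V" "T \<in> mons_over V"
    and "\<And>T. T \<in> mons_over V \<Longrightarrow> (\<And>T'. T' \<in> mons_over V \<Longrightarrow> T' < T \<Longrightarrow> P T') \<Longrightarrow> P T"
  shows "P T"
  using wf_less_mons_over[OF assms(1)] assms(2)
  by (induction T rule: wf_induct_rule) (use assms(3) in blast)

section \<open>Combinations of multiples of basis elements\<close>

lemma poly_mapping_sum_single: "(\<Sum>t\<in>keys p. single t (lookup p t)) = p"
  by (rule poly_mapping_eqI) (auto simp: lookup_sum lookup_single when_def in_keys_iff)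

lemma mult_eq_sum_single_mult:
  fixes q g :: "'k::comm_ring_1 mpoly"
  shows "q * g = (\<Sum>t\<in>keys q. single t (lookup q t) * g)"
  by (subst (1) poly_mapping_sum_single[symmetric]) (rule sum_distrib_right)

lemma single_mult_eq_sum:
  fixes g :: "'k::comm_ring_1 mpoly"
  shows "single s c * g = (\<Sum>u\<in>keys g. single (s + u) (c * lookup g u))"
  by (subst (1) poly_mapping_sum_single[symmetric]) (simp add: sum_distrib_left mult_single)

lemma keys_single_mult:
  fixes g :: "'k::comm_ring_1 mpoly"
  shows "keys (single s c * g) \<subseteq> (+) s ` keys g"
  unfolding single_mult_eq_sum by (rule order.trans[OF keys_sum]) auto

lemma lookup_single_mult:
  fixes g :: "'k::comm_ring_1 mpoly"
  shows "lookup (single s c * g) (s + u) = c * lookup g u"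
proof -
  have "lookup (single s c * g) (s + u) = (\<Sum>u'\<in>keys g. c * lookup g u' when u' = u)"
    by (simp add: single_mult_eq_sum lookup_sum lookup_single when_def eq_commute)
  also have "\<dots> = c * lookup g u"
    by (cases "u \<in> keys g") (auto simp: when_def in_keys_iff)
  finally show ?thesis .
qed

text \<open>\<open>lin_comb G V P p\<close>: p is a sum of terms \<open>c s g\<close> with \<open>g \<in> G\<close>, s a monomial over
  V, and \<open>P (s + HT g)\<close>; for \<open>P = (\<lambda>t. t < T)\<close> this is a representation of p below T.\<close>

inductive lin_comb :: "'k::comm_ring_1 mpoly set \<Rightarrow> (nat \<times> nat) set \<Rightarrow> (mon \<Rightarrow> bool) \<Rightarrow> 'k mpoly \<Rightarrow> bool"
  for G V P where
  lin_comb_zero: "lin_comb G V P 0"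
| lin_comb_step: "lin_comb G V P p \<Longrightarrow> g \<in> G \<Longrightarrow> s \<in> mons_over V \<Longrightarrow> P (s + ht g)
    \<Longrightarrow> lin_comb G V P (p + single s c * g)"

lemma lin_comb_term:
  "g \<in> G \<Longrightarrow> s \<in> mons_over V \<Longrightarrow> P (s + ht g) \<Longrightarrow> lin_comb G V P (single s c * g)"
  using lin_comb_step[OF lin_comb_zero] by fastforce

lemma lin_comb_add:
  assumes "lin_comb G V P p" "lin_comb G V P q"
  shows "lin_comb G V P (p + q)"
  using assms(2)
proof (induction q rule: lin_comb.induct)
  case (lin_comb_step q g s c)
  then show ?case using lin_comb.lin_comb_step[of G V P "p + q"] by (simp add: add.assoc)
qed (simp add: assms(1))

lemma lin_comb_uminus: "lin_comb G V P p \<Longrightarrow> lin_comb G V P (- p)"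
proof (induction p rule: lin_comb.induct)
  case (lin_comb_step p g s c)
  then show ?case
    using lin_comb.lin_comb_step[of G V P "- p" g s "- c"] by (simp add: single_uminus)
qed (simp add: lin_comb_zero)

lemma lin_comb_diff: "lin_comb G V P p \<Longrightarrow> lin_comb G V P q \<Longrightarrow> lin_comb G V P (p - q)"
  using lin_comb_add[OF _ lin_comb_uminus] by (metis diff_conv_add_uminus)

lemma lin_comb_sum:
  "finite F \<Longrightarrow> (\<And>x. x \<in> F \<Longrightarrow> lin_comb G V P (f x)) \<Longrightarrow> lin_comb G V P (sum f F)"
  by (induction rule: finite_induct) (auto intro: lin_comb_add lin_comb_zero)

lemma lin_comb_mono: "lin_comb G V P p \<Longrightarrow> (\<And>t. P t \<Longrightarrow> Q t) \<Longrightarrow> lin_comb G V Q p"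
  by (induction rule: lin_comb.induct) (auto intro: lin_comb.intros)

lemma lin_comb_single_mult:
  assumes "lin_comb G V P p" "w \<in> mons_over V" "\<And>t. P t \<Longrightarrow> Q (w + t)"
  shows "lin_comb G V Q (single w c * p)"
  using assms(1)
proof (induction rule: lin_comb.induct)
  case (lin_comb_step p g s d)
  have "single w c * (p + single s d * g) = single w c * p + single (w + s) (c * d) * g"
    by (simp add: distrib_left mult_single mult.assoc[symmetric])
  then show ?case
    using lin_comb.lin_comb_step[OF lin_comb_step.IH lin_comb_step.hyps(2)
        mons_over_add[OF assms(2) lin_comb_step.hyps(3)]] assms(3)[OF lin_comb_step.hyps(4)]
    by (simp add: add.assoc)
qed (simp add: lin_comb_zero)

lemma lin_comb_ideal_gen:
  fixes G :: "'k::comm_ring_1 mpoly set"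
  assumes "p \<in> ideal_gen n G"
  shows "lin_comb G (Vars n) (\<lambda>_. True) p"
proof -
  obtain F q where F: "finite F" "F \<subseteq> G" "\<And>f. f \<in> F \<Longrightarrow> q f \<in> Xring n"
    and p: "p = (\<Sum>f\<in>F. q f * f)"
    using assms unfolding ideal_gen_def by blast
  have "lin_comb G (Vars n) (\<lambda>_. True) (single t (lookup (q f) t) * f)"
    if "f \<in> F" "t \<in> keys (q f)" for f t
    using that F by (intro lin_comb_term) (auto simp: Xring_def mons_over_def)
  moreover have "p = (\<Sum>f\<in>F. \<Sum>t\<in>keys (q f). single t (lookup (q f) t) * f)"
    unfolding p by (intro sum.cong refl mult_eq_sum_single_mult)
  ultimately show ?thesis by (auto intro!: lin_comb_sum F(1))
qed

section \<open>Buchberger's criterion\<close>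

definition critical_pair_reduces ::
  "'k::comm_ring_1 mpoly set \<Rightarrow> (nat \<times> nat) set \<Rightarrow> 'k mpoly \<Rightarrow> 'k mpoly \<Rightarrow> bool" where
  "critical_pair_reduces G V g h \<longleftrightarrow>
     (\<forall>a \<in> mons_over V. \<forall>b \<in> mons_over V. a + ht g = b + ht h \<longrightarrow>
        lin_comb G V (\<lambda>t. t < a + ht g) (single a 1 * g - single b 1 * h))"

lemma critical_pair_reduces_sym:
  "critical_pair_reduces G V g h \<Longrightarrow> critical_pair_reduces G V h g"
  unfolding critical_pair_reduces_def by (metis lin_comb_uminus minus_diff_eq)

lemma critical_pair_reduces_refl: "critical_pair_reduces G V g g"
  by (simp add: critical_pair_reduces_def lin_comb_zero)

lemma add_eq_add_disjoint_keys:
  fixes a b x y :: "'a \<Rightarrow>\<^sub>0 nat"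
  assumes "keys x \<inter> keys y = {}" "a + y = b + x"
  shows "a = (a - x) + x" "b = (a - x) + y"
proof -
  have eq: "lookup a k + lookup y k = lookup b k + lookup x k" for k
    using arg_cong[OF assms(2), of "\<lambda>m. lookup m k"] by (simp add: lookup_add)
  have disj: "lookup x k = 0 \<or> lookup y k = 0" for k
    using assms(1) by (auto simp: in_keys_iff)
  have "lookup x k \<le> lookup a k \<and> lookup b k = lookup a k - lookup x k + lookup y k" for k
    using eq[of k] disj[of k] by auto
  then show "a = (a - x) + x" "b = (a - x) + y"
    by (auto intro!: poly_mapping_eqI simp: lookup_add minus_poly_mapping.rep_eq)
qed

text \<open>Here x and y are the cofactors of the least common multiple of the head terms:
  every critical pair of g and h is a monomial multiple of this one.\<close>

lemma critical_pair_reducesI: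
  fixes g h :: "'k::comm_ring_1 mpoly"
  assumes "keys x \<inter> keys y = {}" "x + ht g = y + ht h"
    and "lin_comb G V (\<lambda>t. t < x + ht g) (single x 1 * g - single y 1 * h)"
  shows "critical_pair_reduces G V g h"
  unfolding critical_pair_reduces_def
proof (intro ballI impI)
  fix a b assume ab: "a \<in> mons_over V" "b \<in> mons_over V" "a + ht g = b + ht h"
  define w where "w = a - x"
  have "(a + y) + ht h = a + (x + ht g)" by (simp add: assms(2) add.assoc)
  also have "\<dots> = (a + ht g) + x" by (simp add: add_ac)
  also have "\<dots> = (b + x) + ht h" by (simp add: ab(3) add_ac)
  finally have "a + y = b + x" by simp
  then have a: "a = w + x" and b: "b = w + y"
    unfolding w_def by (rule add_eq_add_disjoint_keys[OF assms(1)])+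
  have "lin_comb G V (\<lambda>t. t < a + ht g) (single w 1 * (single x 1 * g - single y 1 * h))"
  proof (rule lin_comb_single_mult[OF assms(3)])
    show "w \<in> mons_over V" unfolding w_def by (rule mons_over_diff[OF ab(1)])
    fix t assume "t < x + ht g"
    then have "w + t < w + (x + ht g)" by (rule add_strict_left_mono)
    then show "w + t < a + ht g" by (simp add: a add.assoc)
  qed
  moreover have "single a 1 * g - single b 1 * h = single w 1 * (single x 1 * g - single y 1 * h)"
    by (simp add: a b mult_single algebra_simps)
  ultimately show "lin_comb G V (\<lambda>t. t < a + ht g) (single a 1 * g - single b 1 * h)" by simp
qed

locale monic_basis =
  fixes G :: "'k::comm_ring_1 mpoly set" and V :: "(nat \<times> nat) set"
  assumes finite_V: "finite V"
    and monic_basis: "g \<in> G \<Longrightarrow> monic var_gt g"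
    and keys_basis: "g \<in> G \<Longrightarrow> keys g \<subseteq> mons_over V"
begin

lemma basis_nonzero: "g \<in> G \<Longrightarrow> g \<noteq> 0"
  using monic_basis by (simp add: monic_def)

lemma lookup_HT_basis: "g \<in> G \<Longrightarrow> lookup g (ht g) = 1"
  using monic_basis by (simp add: monic_def)

lemma HT_basis_in_mons_over: "g \<in> G \<Longrightarrow> ht g \<in> mons_over V"
  using keys_basis HT_in_keys basis_nonzero by blast

lemma lookup_HT_term: "g \<in> G \<Longrightarrow> lookup (single s c * g) (s + ht g) = c"
  by (simp add: lookup_single_mult lookup_HT_basis)

lemma keys_term:
  assumes "g \<in> G" "s \<in> mons_over V" "u \<in> keys (single s c * g)"
  shows "u \<in> mons_over V" "u \<le> s + ht g"
proof -
  obtain u' where u': "u' \<in> keys g" "u = s + u'" using keys_single_mult assms(3) by blast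
  show "u \<in> mons_over V" using u' assms(1,2) keys_basis by (auto intro: mons_over_add)
  show "u \<le> s + ht g" using u' le_HT add_left_mono by blast
qed

lemma keys_lin_comb:
  "lin_comb G V P p \<Longrightarrow> u \<in> keys p \<Longrightarrow> u \<in> mons_over V \<and> (\<exists>T. P T \<and> u \<le> T)"
proof (induction rule: lin_comb.induct)
  case (lin_comb_step p g s c)
  then consider "u \<in> keys p" | "u \<in> keys (single s c * g)"
    using keys_add[of p "single s c * g"] by blast
  then show ?case using lin_comb_step keys_term by cases blast+
qed simp

lemma lookup_lin_comb_below: "lin_comb G V (\<lambda>t. t < T) p \<Longrightarrow> lookup p T = 0"
  using keys_lin_comb[of "\<lambda>t. t < T" p T] by (meson in_keys_iff leD)

lemma lin_comb_le_cases:
  "lin_comb G V (\<lambda>t. t \<le> T) p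
    \<Longrightarrow> lin_comb G V (\<lambda>t. t < T) p \<or> (\<exists>s \<in> mons_over V. \<exists>g \<in> G. s + ht g = T)"
proof (induction rule: lin_comb.induct)
  case (lin_comb_step p g s c)
  then show ?case
    using lin_comb.lin_comb_step[of G V "\<lambda>t. t < T" p g s] by (cases "s + ht g = T") auto
qed (simp add: lin_comb_zero)

lemma lin_comb_bound:
  "lin_comb G V P p \<Longrightarrow> p \<noteq> 0 \<Longrightarrow> \<exists>T \<in> mons_over V. P T \<and> lin_comb G V (\<lambda>t. t \<le> T) p"
proof (induction rule: lin_comb.induct)
  case (lin_comb_step p g s c)
  define T where "T = s + ht g"
  have T: "T \<in> mons_over V" "P T"
    using lin_comb_step.hyps by (auto simp: T_def intro: mons_over_add HT_basis_in_mons_over)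
  show ?case
  proof (cases "p = 0")
    case True
    then show ?thesis using T lin_comb_term[OF lin_comb_step.hyps(2,3), of "\<lambda>t. t \<le> T"]
      by (auto simp: T_def)
  next
    case False
    then obtain T' where T': "T' \<in> mons_over V" "P T'" "lin_comb G V (\<lambda>t. t \<le> T') p"
      using lin_comb_step.IH by blast
    have "lin_comb G V (\<lambda>t. t \<le> max T T') p"
      using lin_comb_mono[OF T'(3)] by (simp add: le_max_iff_disj)
    then have "lin_comb G V (\<lambda>t. t \<le> max T T') (p + single s c * g)"
      by (rule lin_comb.lin_comb_step[OF _ lin_comb_step.hyps(2,3)]) (simp add: T_def)
    moreover have "max T T' \<in> mons_over V" "P (max T T')" using T T' by (simp_all add: max_def)
    ultimately show ?thesis by blast
  qed
qed simp

lemma keys_tail: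
  assumes "g \<in> G" "t \<in> keys (g - single (ht g) 1)"
  shows "t \<in> keys g" "t < ht g"
proof -
  have "t \<noteq> ht g" using assms by (auto simp: lookup_HT_basis in_keys_iff lookup_minus)
  moreover from this show "t \<in> keys g" using assms(2) by (simp add: in_keys_iff lookup_minus lookup_single)
  ultimately show "t < ht g" using le_HT[of t g] by (simp add: le_neq_trans)
qed

lemma lin_comb_tail_mult:
  assumes "g \<in> G" "h \<in> G"
  shows "lin_comb G V (\<lambda>t. t < ht g + ht h) ((g - single (ht g) 1) * h)"
proof (subst mult_eq_sum_single_mult, intro lin_comb_sum finite_keys lin_comb_term assms(2))
  fix t assume "t \<in> keys (g - single (ht g) 1)"
  with keys_tail[OF assms(1)] keys_basis[OF assms(1)]
  show "t \<in> mons_over V" "t + ht h < ht g + ht h" by auto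
qed

lemma product_criterion:
  assumes "g \<in> G" "h \<in> G" "keys (ht g) \<inter> keys (ht h) = {}"
  shows "critical_pair_reduces G V g h"
proof (rule critical_pair_reducesI[where x = "ht h" and y = "ht g"])
  let ?tg = "g - single (ht g) 1" and ?th = "h - single (ht h) 1"
  have "lin_comb G V (\<lambda>t. t < ht g + ht h) (?tg * h - ?th * g)"
    using lin_comb_tail_mult[OF assms(1,2)] lin_comb_tail_mult[OF assms(2,1)]
    by (intro lin_comb_diff) (simp_all add: add.commute)
  moreover have "?tg * h - ?th * g = single (ht h) 1 * g - single (ht g) 1 * h"
    by (simp add: algebra_simps)
  ultimately show "lin_comb G V (\<lambda>t. t < ht h + ht g) (single (ht h) 1 * g - single (ht g) 1 * h)"
    by (simp add: add.commute)
qed (use assms(3) in \<open>auto simp: add.commute\<close>)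

end

locale buchberger = monic_basis +
  assumes critical_pairs: "g \<in> G \<Longrightarrow> h \<in> G \<Longrightarrow> critical_pair_reduces G V g h"
begin

text \<open>The critical pairs let every term at T be traded for a multiple of the fixed term
  \<open>s0 g0\<close> plus terms below T.\<close>

lemma lin_comb_le_split:
  assumes "lin_comb G V (\<lambda>t. t \<le> T) p" "g0 \<in> G" "s0 \<in> mons_over V" "s0 + ht g0 = T"
  shows "\<exists>q. lin_comb G V (\<lambda>t. t < T) q \<and> p = q + single s0 (lookup p T) * g0"
  using assms(1)
proof (induction rule: lin_comb.induct)
  case lin_comb_zero
  show ?case by (auto intro: lin_comb.lin_comb_zero)
next
  case (lin_comb_step p g s c)
  obtain q where q: "lin_comb G V (\<lambda>t. t < T) q" "p = q + single s0 (lookup p T) * g0"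
    using lin_comb_step.IH by blast
  show ?case
  proof (cases "s + ht g = T")
    case False
    then have "lin_comb G V (\<lambda>t. t < T) (single s c * g)"
      using lin_comb_step.hyps by (intro lin_comb_term) auto
    moreover from this have "lookup (single s c * g) T = 0" by (rule lookup_lin_comb_below)
    ultimately show ?thesis using q
      by (intro exI[of _ "q + single s c * g"]) (auto intro: lin_comb_add simp: lookup_add algebra_simps)
  next
    case True
    let ?S = "single s 1 * g - single s0 1 * g0"
    have "lin_comb G V (\<lambda>t. t < s + ht g) ?S"
      using critical_pairs[OF lin_comb_step.hyps(2) assms(2)] lin_comb_step.hyps(3) assms(3,4) True
      unfolding critical_pair_reduces_def by blast
    then have "lin_comb G V (\<lambda>t. t < T) ?S" using True by simp
    then have "lin_comb G V (\<lambda>t. t < T) (single 0 c * ?S)"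
      by (rule lin_comb_single_mult) (simp_all add: zero_in_mons_over)
    then have "lin_comb G V (\<lambda>t. t < T) (q + single 0 c * ?S)" by (rule lin_comb_add[OF q(1)])
    moreover have "lookup (single s c * g) T = c"
      using lookup_HT_term[OF lin_comb_step.hyps(2), of s c] True by simp
    then have "p + single s c * g
        = (q + single 0 c * ?S) + single s0 (lookup (p + single s c * g) T) * g0"
      using q(2) by (simp add: lookup_add algebra_simps mult_single single_add mult.assoc[symmetric])
    ultimately show ?thesis by blast
  qed
qed

lemma lin_comb_drop_top:
  assumes "lin_comb G V (\<lambda>t. t \<le> T) p" "lookup p T = 0"
  shows "lin_comb G V (\<lambda>t. t < T) p"
  using lin_comb_le_cases[OF assms(1)] lin_comb_le_split[OF assms(1)] assms(2) by auto

lemma HT_lin_comb_reducible: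
  assumes "lin_comb G V (\<lambda>_. True) p" "p \<noteq> 0"
  shows "\<exists>s \<in> mons_over V. \<exists>g \<in> G. s + ht g = ht p"
proof -
  obtain T where T: "T \<in> mons_over V" "lin_comb G V (\<lambda>t. t \<le> T) p"
    using lin_comb_bound[OF assms] by blast
  from finite_V T assms(2) show ?thesis
  proof (induction T arbitrary: p rule: mons_over_less_induct)
    case (less T)
    show ?case
    proof (cases "lookup p T = 0")
      case False
      then have "ht p = T"
        using keys_lin_comb[OF less.prems(1)] by (intro HT_eqI) (auto simp: in_keys_iff dest: order.trans)
      then show ?thesis
        using lin_comb_le_cases[OF less.prems(1)] lookup_lin_comb_below False by blast
    next
      case True
      then obtain T' where "T' \<in> mons_over V" "T' < T" "lin_comb G V (\<lambda>t. t \<le> T') p"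
        using lin_comb_bound[OF lin_comb_drop_top[OF less.prems(1)] less.prems(2)] by blast
      then show ?thesis using less.IH less.prems(2) by blast
    qed
  qed
qed

lemma lin_comb_red_zero:
  assumes "lin_comb G V (\<lambda>_. True) p"
  shows "(red var_gt G)\<^sup>*\<^sup>* p 0"
proof (cases "p = 0")
  case False
  have "ht p \<in> mons_over V" using keys_lin_comb[OF assms HT_in_keys[OF False]] by blast
  from finite_V this assms False show ?thesis
  proof (induction "ht p" arbitrary: p rule: mons_over_less_induct)
    case less
    obtain s g where sg: "s \<in> mons_over V" "g \<in> G" "s + ht g = ht p"
      using HT_lin_comb_reducible[OF less.prems] by blast
    define c where "c = lookup p (ht p)"
    define p' where "p' = p - single s c * g"
    have "c \<noteq> 0" using HT_in_keys[OF less.prems(2)] by (simp add: c_def in_keys_iff)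
    then have step: "red var_gt G p p'"
      unfolding red_def p'_def using sg c_def by blast
    have p': "lin_comb G V (\<lambda>_. True) p'"
      unfolding p'_def by (intro lin_comb_diff less.prems(1) lin_comb_term sg) simp
    show ?case
    proof (cases "p' = 0")
      case False
      have "u \<le> ht p" if "u \<in> keys p'" for u
      proof -
        from that consider "u \<in> keys p" | "u \<in> keys (single s c * g)"
          using keys_diff[of p "single s c * g"] unfolding p'_def by blast
        then show ?thesis using le_HT keys_term(2)[OF sg(2,1)] sg(3) by cases auto
      qed
      moreover have "lookup p' (ht p) = 0"
        using lookup_HT_term[OF sg(2), of s c] sg(3) by (simp add: p'_def lookup_minus c_def)
      ultimately have "ht p' < ht p"
        using HT_in_keys[OF False] by (metis in_keys_iff order.not_eq_order_implies_strict)
      moreover have "ht p' \<in> mons_over V" using keys_lin_comb[OF p' HT_in_keys[OF False]] by blast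
      ultimately have "(red var_gt G)\<^sup>*\<^sup>* p' 0" using less.hyps p' False by blast
      with step show ?thesis by (rule converse_rtranclp_into_rtranclp)
    qed (use step in auto)
  qed
qed simp

end

section \<open>The generators\<close>

definition xmon :: "nat \<Rightarrow> nat \<Rightarrow> mon" where
  "xmon u v = single (u, v) 1"

lemma var_eq_single_xmon: "var u v = single (xmon u v) 1"
  by (simp add: var_def xmon_def)

lemma keys_xmon [simp]: "keys (xmon u v) = {(u, v)}"
  by (simp add: xmon_def)

definition gen :: "'k::comm_ring_1 \<Rightarrow> 'k \<Rightarrow> nat \<Rightarrow> nat \<Rightarrow> nat \<Rightarrow> 'k mpoly" where
  "gen \<beta> \<alpha> i j k = var i k * var i j - var i j * var j k + var i k * var j k
     + const \<beta> * var i k + const \<alpha>"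

definition gen_set :: "'k::comm_ring_1 \<Rightarrow> 'k \<Rightarrow> nat \<Rightarrow> 'k mpoly set" where
  "gen_set \<beta> \<alpha> n = {gen \<beta> \<alpha> i j k | i j k. (i, j, k) \<in> Triples n}"

lemma gen_eq_uminus_Jgen: "gen \<beta> \<alpha> i j k = - Jgen \<beta> \<alpha> i j k"
  unfolding gen_def Jgen_def by (simp add: algebra_simps)

lemma gen_in_gen_set: "(i, j, k) \<in> Triples n \<Longrightarrow> gen \<beta> \<alpha> i j k \<in> gen_set \<beta> \<alpha> n"
  unfolding gen_set_def by blast

lemma gen_eq_sum_single:
  "gen \<beta> \<alpha> i j k = single (xmon i j + xmon i k) 1 - single (xmon i j + xmon j k) 1
     + single (xmon i k + xmon j k) 1 + single (xmon i k) \<beta> + single 0 \<alpha>"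
  by (simp add: gen_def var_eq_single_xmon const_def mult_single add.commute)

lemma keys_gen:
  "keys (gen \<beta> \<alpha> i j k) \<subseteq> {xmon i j + xmon i k, xmon i j + xmon j k, xmon i k + xmon j k, xmon i k, 0}"
  by (auto simp: gen_eq_sum_single in_keys_iff lookup_add lookup_minus lookup_single when_def
      split: if_splits)

lemma
  fixes \<beta> \<alpha> :: "'k::comm_ring_1"
  assumes "i < j" "j < k"
  shows HT_gen: "ht (gen \<beta> \<alpha> i j k) = xmon i j + xmon i k"
    and lookup_HT_gen: "lookup (gen \<beta> \<alpha> i j k) (xmon i j + xmon i k) = 1"
proof -
  let ?M = "xmon i j + xmon i k"
  have less: "xmon i j + xmon j k < ?M" "xmon i k + xmon j k < ?M" "xmon i k < ?M" "0 < ?M"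
    using assms
    by - (rule less_poly_mappingI[where k = "(i, j)"] less_poly_mappingI[where k = "(i, k)"];
        force simp: xmon_def lookup_add lookup_single when_def)+
  have "lookup (single m c) ?M = 0" if "m < ?M" for m and c :: 'k
    using that by (simp add: lookup_single_not_eq less_imp_neq)
  then show lookup: "lookup (gen \<beta> \<alpha> i j k) ?M = 1"
    unfolding gen_eq_sum_single using less by (simp add: lookup_add lookup_minus)
  show "ht (gen \<beta> \<alpha> i j k) = ?M"
    using lookup keys_gen[of \<beta> \<alpha> i j k] less by (intro HT_eqI) (auto simp: in_keys_iff)
qed

lemma xmon_in_mons_over: "(u, v) \<in> V \<Longrightarrow> xmon u v \<in> mons_over V"
  by (simp add: mons_over_def)

lemma keys_gen_in_mons_over:
  assumes "(i, j, k) \<in> Triples n"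
  shows "keys (gen \<beta> \<alpha> i j k) \<subseteq> mons_over (Vars n)"
proof -
  have "(i, j) \<in> Vars n" "(i, k) \<in> Vars n" "(j, k) \<in> Vars n"
    using assms by (auto simp: Triples_def Vars_def)
  then show ?thesis
    using keys_gen[of \<beta> \<alpha> i j k]
    by (auto intro: mons_over_add xmon_in_mons_over zero_in_mons_over)
qed

lemma monic_basis_gen_set: "monic_basis (gen_set \<beta> \<alpha> n) (Vars n)"
proof
  have "Vars n \<subseteq> {..n} \<times> {..n}" by (auto simp: Vars_def)
  then show "finite (Vars n)" by (rule finite_subset) simp
next
  fix g assume "g \<in> gen_set \<beta> \<alpha> n"
  then obtain i j k where ijk: "(i, j, k) \<in> Triples n" and g: "g = gen \<beta> \<alpha> i j k"
    unfolding gen_set_def by blast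
  then have "i < j" "j < k" by (simp_all add: Triples_def)
  from lookup_HT_gen[OF this, of \<beta> \<alpha>] show "monic var_gt g"
    unfolding monic_def g HT_gen[OF \<open>i < j\<close> \<open>j < k\<close>] by (metis lookup_zero zero_neq_one)
  show "keys g \<subseteq> mons_over (Vars n)" unfolding g by (rule keys_gen_in_mons_over[OF ijk])
qed

text \<open>For \<open>i < a < b < c\<close> the head terms of the generators for iab, iac, ibc pairwise share an
  indeterminate, and every pair has least common multiple \<open>x_ia x_ib x_ic\<close>. These identities
  rewrite the three S-polynomials with multipliers whose products with the head terms stay
  below that monomial.\<close>

lemma syzygy_iab_iac:
  "var i c * gen \<beta> \<alpha> i a b - var i b * gen \<beta> \<alpha> i a c =
    var a c * gen \<beta> \<alpha> i a b - var a b * gen \<beta> \<alpha> i a c + var a b * gen \<beta> \<alpha> i b c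
    - var a c * gen \<beta> \<alpha> i b c - var i b * gen \<beta> \<alpha> a b c + var i c * gen \<beta> \<alpha> a b c"
  unfolding gen_def by (simp add: algebra_simps)

lemma syzygy_iab_ibc:
  "var i c * gen \<beta> \<alpha> i a b - var i a * gen \<beta> \<alpha> i b c =
    var b c * gen \<beta> \<alpha> i a b - var a b * gen \<beta> \<alpha> i a c - var b c * gen \<beta> \<alpha> i a c
    - const \<beta> * gen \<beta> \<alpha> i a c - var i a * gen \<beta> \<alpha> a b c + var a b * gen \<beta> \<alpha> i b c
    + const \<beta> * gen \<beta> \<alpha> i b c + var i c * gen \<beta> \<alpha> a b c"
  unfolding gen_def by (simp add: algebra_simps)

lemma syzygy_iac_ibc:
  "var i b * gen \<beta> \<alpha> i a c - var i a * gen \<beta> \<alpha> i b c =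
    var b c * gen \<beta> \<alpha> i a b - var a c * gen \<beta> \<alpha> i a b - var b c * gen \<beta> \<alpha> i a c
    - const \<beta> * gen \<beta> \<alpha> i a c - var i a * gen \<beta> \<alpha> a b c + var a c * gen \<beta> \<alpha> i b c
    + const \<beta> * gen \<beta> \<alpha> i b c + var i b * gen \<beta> \<alpha> a b c"
  unfolding gen_def by (simp add: algebra_simps)

lemma lin_comb_var_mult:
  "g \<in> G \<Longrightarrow> (u, v) \<in> V \<Longrightarrow> P (xmon u v + ht g) \<Longrightarrow> lin_comb G V P (var u v * g)"
  unfolding var_eq_single_xmon by (rule lin_comb_term) (simp_all add: xmon_in_mons_over)

lemma lin_comb_const_mult: "g \<in> G \<Longrightarrow> P (ht g) \<Longrightarrow> lin_comb G V P (const c * g)"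
  unfolding const_def by (rule lin_comb_term) (simp_all add: zero_in_mons_over)

context
  fixes \<beta> \<alpha> :: "'k::comm_ring_1" and n i a b c :: nat
  assumes triple: "1 \<le> i" "i < a" "a < b" "b < c" "c \<le> n"
begin

private lemma gens_in_gen_set:
  "gen \<beta> \<alpha> i a b \<in> gen_set \<beta> \<alpha> n" "gen \<beta> \<alpha> i a c \<in> gen_set \<beta> \<alpha> n"
  "gen \<beta> \<alpha> i b c \<in> gen_set \<beta> \<alpha> n" "gen \<beta> \<alpha> a b c \<in> gen_set \<beta> \<alpha> n"
  using triple by (auto intro!: gen_in_gen_set simp: Triples_def)

private lemma HT_gens:
  "ht (gen \<beta> \<alpha> i a b) = xmon i a + xmon i b" "ht (gen \<beta> \<alpha> i a c) = xmon i a + xmon i c"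
  "ht (gen \<beta> \<alpha> i b c) = xmon i b + xmon i c" "ht (gen \<beta> \<alpha> a b c) = xmon a b + xmon a c"
  using triple by (simp_all add: HT_gen)

private lemma vars_in_Vars:
  "(i, a) \<in> Vars n" "(i, b) \<in> Vars n" "(i, c) \<in> Vars n"
  "(a, b) \<in> Vars n" "(a, c) \<in> Vars n" "(b, c) \<in> Vars n"
  using triple by (auto simp: Vars_def)

private lemma S_polys_below:
  "lin_comb (gen_set \<beta> \<alpha> n) (Vars n) (\<lambda>t. t < xmon i a + xmon i b + xmon i c)
     (var i c * gen \<beta> \<alpha> i a b - var i b * gen \<beta> \<alpha> i a c)"
  "lin_comb (gen_set \<beta> \<alpha> n) (Vars n) (\<lambda>t. t < xmon i a + xmon i b + xmon i c)
     (var i c * gen \<beta> \<alpha> i a b - var i a * gen \<beta> \<alpha> i b c)"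
  "lin_comb (gen_set \<beta> \<alpha> n) (Vars n) (\<lambda>t. t < xmon i a + xmon i b + xmon i c)
     (var i b * gen \<beta> \<alpha> i a c - var i a * gen \<beta> \<alpha> i b c)"
proof -
  note intros = lin_comb_add lin_comb_diff lin_comb_var_mult lin_comb_const_mult
    gens_in_gen_set vars_in_Vars
  note less_by_first_difference = less_poly_mappingI[where k = "(i, a)"]
    less_poly_mappingI[where k = "(i, b)"] less_poly_mappingI[where k = "(i, c)"]
  show "lin_comb (gen_set \<beta> \<alpha> n) (Vars n) (\<lambda>t. t < xmon i a + xmon i b + xmon i c)
     (var i c * gen \<beta> \<alpha> i a b - var i b * gen \<beta> \<alpha> i a c)"
    unfolding syzygy_iab_iac
    by (intro intros, simp_all only: HT_gens) (insert triple, rule less_by_first_difference;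
        force simp: xmon_def lookup_add lookup_single when_def)+
  show "lin_comb (gen_set \<beta> \<alpha> n) (Vars n) (\<lambda>t. t < xmon i a + xmon i b + xmon i c)
     (var i c * gen \<beta> \<alpha> i a b - var i a * gen \<beta> \<alpha> i b c)"
    unfolding syzygy_iab_ibc
    by (intro intros, simp_all only: HT_gens) (insert triple, rule less_by_first_difference;
        force simp: xmon_def lookup_add lookup_single when_def)+
  show "lin_comb (gen_set \<beta> \<alpha> n) (Vars n) (\<lambda>t. t < xmon i a + xmon i b + xmon i c)
     (var i b * gen \<beta> \<alpha> i a c - var i a * gen \<beta> \<alpha> i b c)"
    unfolding syzygy_iac_ibc
    by (intro intros, simp_all only: HT_gens) (insert triple, rule less_by_first_difference;
        force simp: xmon_def lookup_add lookup_single when_def)+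
qed

lemma critical_pairs_triple:
  "critical_pair_reduces (gen_set \<beta> \<alpha> n) (Vars n) (gen \<beta> \<alpha> i a b) (gen \<beta> \<alpha> i a c)"
  "critical_pair_reduces (gen_set \<beta> \<alpha> n) (Vars n) (gen \<beta> \<alpha> i a b) (gen \<beta> \<alpha> i b c)"
  "critical_pair_reduces (gen_set \<beta> \<alpha> n) (Vars n) (gen \<beta> \<alpha> i a c) (gen \<beta> \<alpha> i b c)"
proof -
  note S = S_polys_below[unfolded var_eq_single_xmon]
  show "critical_pair_reduces (gen_set \<beta> \<alpha> n) (Vars n) (gen \<beta> \<alpha> i a b) (gen \<beta> \<alpha> i a c)"
    by (rule critical_pair_reducesI[where x = "xmon i c" and y = "xmon i b"])
      (use S(1) triple in \<open>simp_all add: HT_gens add_ac\<close>)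
  show "critical_pair_reduces (gen_set \<beta> \<alpha> n) (Vars n) (gen \<beta> \<alpha> i a b) (gen \<beta> \<alpha> i b c)"
    by (rule critical_pair_reducesI[where x = "xmon i c" and y = "xmon i a"])
      (use S(2) triple in \<open>simp_all add: HT_gens add_ac\<close>)
  show "critical_pair_reduces (gen_set \<beta> \<alpha> n) (Vars n) (gen \<beta> \<alpha> i a c) (gen \<beta> \<alpha> i b c)"
    by (rule critical_pair_reducesI[where x = "xmon i b" and y = "xmon i a"])
      (use S(3) triple in \<open>simp_all add: HT_gens add_ac\<close>)
qed

end

lemma critical_pairs_gen_ordered:
  assumes "(i, j, k) \<in> Triples n" "(i, j', k') \<in> Triples n" "(j, k) < (j', k')"
    and "{j, k} \<inter> {j', k'} \<noteq> {}"
  shows "critical_pair_reduces (gen_set \<beta> \<alpha> n) (Vars n) (gen \<beta> \<alpha> i j k) (gen \<beta> \<alpha> i j' k')"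
proof -
  from assms consider "j' = j" "k < k'" | "j < j'" "j' = k" | "j < j'" "k' = k"
    by (auto simp: Triples_def less_prod_def')
  then show ?thesis
  proof cases
    case 1
    then show ?thesis using assms(1,2) critical_pairs_triple(1)[of i j k k' n]
      by (simp add: Triples_def)
  next
    case 2
    then show ?thesis using assms(1,2) critical_pairs_triple(2)[of i j k k' n]
      by (simp add: Triples_def)
  next
    case 3
    then show ?thesis using assms(1,2) critical_pairs_triple(3)[of i j j' k n]
      by (simp add: Triples_def)
  qed
qed

lemma keys_HT_gen:
  "(i, j, k) \<in> Triples n \<Longrightarrow> keys (ht (gen \<beta> \<alpha> i j k)) \<subseteq> {(i, j), (i, k)}"
  using keys_add[of "xmon i j" "xmon i k"] by (auto simp: Triples_def HT_gen)

lemma critical_pairs_gen_set: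
  assumes "g \<in> gen_set \<beta> \<alpha> n" "h \<in> gen_set \<beta> \<alpha> n"
  shows "critical_pair_reduces (gen_set \<beta> \<alpha> n) (Vars n) g h"
proof -
  interpret monic_basis "gen_set \<beta> \<alpha> n" "Vars n" by (rule monic_basis_gen_set)
  obtain i j k i' j' k' where ijk: "(i, j, k) \<in> Triples n" "g = gen \<beta> \<alpha> i j k"
    and ijk': "(i', j', k') \<in> Triples n" "h = gen \<beta> \<alpha> i' j' k'"
    using assms unfolding gen_set_def by blast
  show ?thesis
  proof (cases "{(i, j), (i, k)} \<inter> {(i', j'), (i', k')} = {}")
    case True
    have "keys (ht g) \<subseteq> {(i, j), (i, k)}" "keys (ht h) \<subseteq> {(i', j'), (i', k')}"
      using keys_HT_gen ijk ijk' by simp_all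
    with True have "keys (ht g) \<inter> keys (ht h) = {}" by blast
    then show ?thesis by (rule product_criterion[OF assms])
  next
    case False
    then have "i' = i" "{j, k} \<inter> {j', k'} \<noteq> {}" by auto
    then consider "(j, k) = (j', k')"
      | "(j, k) < (j', k')" "{j, k} \<inter> {j', k'} \<noteq> {}"
      | "(j', k') < (j, k)" "{j', k'} \<inter> {j, k} \<noteq> {}"
      by (metis Int_commute linorder_neqE)
    then show ?thesis
    proof cases
      case 1
      then show ?thesis using ijk ijk' \<open>i' = i\<close> critical_pair_reduces_refl by simp
    next
      case 2
      then show ?thesis
        using critical_pairs_gen_ordered[of i j k n j' k'] ijk ijk' \<open>i' = i\<close> by simp
    next
      case 3
      then show ?thesis
        using critical_pair_reduces_sym[OF critical_pairs_gen_ordered[of i j' k' n j k]]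
          ijk ijk' \<open>i' = i\<close> by simp
    qed
  qed
qed

lemma buchberger_gen_set: "buchberger (gen_set \<beta> \<alpha> n) (Vars n)"
  using monic_basis_gen_set critical_pairs_gen_set
  by (intro buchberger.intro buchberger_axioms.intro)

section \<open>The ideal\<close>

lemma ideal_gen_image_uminus_subset:
  fixes S :: "'k::comm_ring_1 mpoly set"
  shows "ideal_gen n S \<subseteq> ideal_gen n (uminus ` S)"
proof
  fix p assume "p \<in> ideal_gen n S"
  then obtain F q where F: "finite F" "F \<subseteq> S" "\<And>f. f \<in> F \<Longrightarrow> q f \<in> Xring n"
    and p: "p = (\<Sum>f\<in>F. q f * f)"
    unfolding ideal_gen_def by blast
  have "p = (\<Sum>f\<in>uminus ` F. - q (- f) * f)"
    unfolding p by (simp add: sum.reindex inj_on_def)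
  moreover have "- q (- f) \<in> Xring n" if "f \<in> uminus ` F" for f
  proof -
    from that obtain f' where "f' \<in> F" "- f = f'" by force
    then show ?thesis using F(3) by (simp add: Xring_def)
  qed
  ultimately show "p \<in> ideal_gen n (uminus ` S)"
    unfolding ideal_gen_def using F(1,2)
    by (intro CollectI exI[of _ "uminus ` F"] exI[of _ "\<lambda>f. - q (- f)"]) auto
qed

lemma ideal_gen_image_uminus:
  fixes S :: "'k::comm_ring_1 mpoly set"
  shows "ideal_gen n (uminus ` S) = ideal_gen n S"
  using ideal_gen_image_uminus_subset[of n S] ideal_gen_image_uminus_subset[of n "uminus ` S"]
  by (simp add: image_image)

lemma ideal_gen_gen_set: "ideal_gen n (gen_set \<beta> \<alpha> n) = Jideal \<beta> \<alpha> n"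
proof -
  have "gen_set \<beta> \<alpha> n = uminus ` {Jgen \<beta> \<alpha> i j k | i j k. (i, j, k) \<in> Triples n}"
    unfolding gen_set_def gen_eq_uminus_Jgen by blast
  then show ?thesis unfolding Jideal_def by (simp add: ideal_gen_image_uminus)
qed

theorem proposition4p9:
  fixes \<beta> \<alpha> :: "'k::comm_ring_1" and n :: nat
  assumes "n \<ge> 1"
  shows "is_groebner_basis var_gt n
           {var i k * var i j - var i j * var j k + var i k * var j k
              + const \<beta> * var i k + const \<alpha> | i j k. (i, j, k) \<in> Triples n}
           (Jideal \<beta> \<alpha> n)"
proof -
  interpret buchberger "gen_set \<beta> \<alpha> n" "Vars n" by (rule buchberger_gen_set)
  have "\<forall>p \<in> Jideal \<beta> \<alpha> n. (red var_gt (gen_set \<beta> \<alpha> n))\<^sup>*\<^sup>* p 0"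
    using lin_comb_red_zero lin_comb_ideal_gen ideal_gen_gen_set by blast
  then have "is_groebner_basis var_gt n (gen_set \<beta> \<alpha> n) (Jideal \<beta> \<alpha> n)"
    unfolding is_groebner_basis_def using monic_basis ideal_gen_gen_set by blast
  then show ?thesis unfolding gen_set_def gen_def .
qed

end
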